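(* Let $t \ge 1$, $n = t^2$, and let $b_1 < b_2 < \dots < b_t$ be positive integers forming a free $3$-arithmetic-progression sequence. Let $H_s$ be the binary matrix with $n$ columns defined in the context. Then the Tanner graph of $H_s$ has girth $8$, and the binary linear code with parity-check matrix $H_s$ has minimum distance at least $6$.
   Context: A sequence of integers is a free $3$-arithmetic-progression ($3$-AP) sequence if no three distinct elements $x,y,z$ of it satisfy $x + y = 2z$. The matrix $H_s$: set $c_1 = t-1$ and $c_2 = t-1+b_t$. Each column $j \in \{1,\dots,n\}$ is assigned a pair $(a_j, i_j) \in \{1,\dots,t\}\times\{1,\dots,t\}$ such that each value $a \in \{1,\dots,t\}$ equals $a_j$ for exactly $t$ columns, and columns $\ell \neq k$ with $a_\ell = a_k$ have $i_\ell \neq i_k$ (so $j \mapsto (a_j,i_j)$ is a bijection onto $\{1,\dots,t\}^2$). Column $j$ of $H_s$ has exactly three entries equal to $1$, in rows $$ r_{1j} = a_j,\qquad r_{2j} = c_1 + b_{i_j} + r_{1j},\qquad r_{3j} = c_2 + a_j + r_{2j}, $$ and all other entries $0$ (the number of rows is any number at least the largest row index used; rows with no $1$ do not matter). The rows $1,\dots,t$, the rows containing the entries $r_{2j}$, and the rows containing the entries $r_{3j}$ form three disjoint ranges. The Tanner graph of $H_s$ is the bipartite graph with one vertex per row and one per column, a row adjacent to a column iff the corresponding entry is $1$; its girth is the length of its shortest cycle. The code with parity-check matrix $H_s$ is $\{x \in \mathbb{F}_2^n : H_s x = 0\}$, and its minimum distance is the minimum Hamming weight of a nonzero codeword. *)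

theory Defs
  imports Main "HOL-Library.Extended_Nat"
begin

definition free_3AP :: "nat \<Rightarrow> (nat \<Rightarrow> nat) \<Rightarrow> bool" where
  "free_3AP t b \<longleftrightarrow>
     (\<forall>i\<in>{1..t}. \<forall>j\<in>{1..t}. \<forall>k\<in>{1..t}.
        b i \<noteq> b j \<and> b i \<noteq> b k \<and> b j \<noteq> b k \<longrightarrow> b i + b j \<noteq> 2 * b k)"

(* Row indices of the three ones in column j of H_s; column j carries the pair (a j, ii j). *)
definition row1 :: "(nat \<Rightarrow> nat) \<Rightarrow> nat \<Rightarrow> nat" where
  "row1 a j = a j"

definition row2 :: "nat \<Rightarrow> (nat \<Rightarrow> nat) \<Rightarrow> (nat \<Rightarrow> nat) \<Rightarrow> (nat \<Rightarrow> nat) \<Rightarrow> nat \<Rightarrow> nat" where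
  "row2 t b a ii j = (t - 1) + b (ii j) + row1 a j"

definition row3 :: "nat \<Rightarrow> (nat \<Rightarrow> nat) \<Rightarrow> (nat \<Rightarrow> nat) \<Rightarrow> (nat \<Rightarrow> nat) \<Rightarrow> nat \<Rightarrow> nat" where
  "row3 t b a ii j = (t - 1 + b t) + a j + row2 t b a ii j"

definition H_s :: "nat \<Rightarrow> (nat \<Rightarrow> nat) \<Rightarrow> (nat \<Rightarrow> nat) \<Rightarrow> (nat \<Rightarrow> nat) \<Rightarrow> nat \<Rightarrow> nat \<Rightarrow> nat \<Rightarrow> nat" where
  "H_s t b a ii m r j =
     (if r \<in> {1..m} \<and> j \<in> {1..t^2} \<and> r \<in> {row1 a j, row2 t b a ii j, row3 t b a ii j}
      then 1 else 0)"

fun tanner_adj :: "(nat \<Rightarrow> nat \<Rightarrow> nat) \<Rightarrow> nat \<Rightarrow> nat \<Rightarrow> nat + nat \<Rightarrow> nat + nat \<Rightarrow> bool" where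
  "tanner_adj H m n (Inl r) (Inr j) = (r \<in> {1..m} \<and> j \<in> {1..n} \<and> H r j = 1)"
| "tanner_adj H m n (Inr j) (Inl r) = (r \<in> {1..m} \<and> j \<in> {1..n} \<and> H r j = 1)"
| "tanner_adj H m n _ _ = False"

definition is_cycle :: "('v \<Rightarrow> 'v \<Rightarrow> bool) \<Rightarrow> 'v list \<Rightarrow> bool" where
  "is_cycle adj vs \<longleftrightarrow> length vs \<ge> 3 \<and> distinct vs \<and>
     (\<forall>k < length vs. adj (vs ! k) (vs ! ((k + 1) mod length vs)))"

(* Girth: length of a shortest cycle (infinity if there is no cycle). *)
definition girth :: "('v \<Rightarrow> 'v \<Rightarrow> bool) \<Rightarrow> enat" where
  "girth adj = Inf {enat (length vs) | vs. is_cycle adj vs}"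

definition code :: "(nat \<Rightarrow> nat \<Rightarrow> nat) \<Rightarrow> nat \<Rightarrow> nat \<Rightarrow> (nat \<Rightarrow> nat) set" where
  "code H m n = {x. (\<forall>j\<in>{1..n}. x j \<in> {0, 1}) \<and> (\<forall>j. j \<notin> {1..n} \<longrightarrow> x j = 0) \<and>
                    (\<forall>r\<in>{1..m}. even (\<Sum>j=1..n. H r j * x j))}"

definition hamming_weight :: "nat \<Rightarrow> (nat \<Rightarrow> nat) \<Rightarrow> nat" where
  "hamming_weight n x = card {j\<in>{1..n}. x j \<noteq> 0}"

(* Minimum distance: minimum weight of a nonzero codeword (infinity if none). *)
definition min_distance :: "(nat \<Rightarrow> nat \<Rightarrow> nat) \<Rightarrow> nat \<Rightarrow> nat \<Rightarrow> enat" where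
  "min_distance H m n =
     Inf {enat (hamming_weight n x) | x. x \<in> code H m n \<and> (\<exists>j\<in>{1..n}. x j \<noteq> 0)}"

end

theory Submission
  imports Defs
begin

text \<open>
  The Tanner graph is bipartite, so a cycle shorter than 8 has length 4 or 6. The rows of
  \<open>H_s\<close> fall into three disjoint layers, one entry of every column in each, so two columns can
  only share a row within a layer. Agreeing in two layers determines the pair
  \<open>(a j, b (ii j))\<close> and hence the column, which rules out 4-cycles. A 6-cycle has to run
  through all three layers, and going around it forces \<open>b\<^sub>p + b\<^sub>r = 2 b\<^sub>q\<close> for three distinct
  values, a 3-term progression.

  For the distance, the support \<open>S\<close> of a codeword meets every row an even number of times.
  Counting incidences with column weight 3 shows that \<open>|S|\<close> is even. Each of the three rows of
  a column in \<open>S\<close> is shared with another column of \<open>S\<close>, and these partners are distinct since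
  there are no 4-cycles, so \<open>|S| \<ge> 4\<close>. If \<open>|S| = 4\<close>, any two columns of \<open>S\<close> share a row,
  which closes a 6-cycle.
\<close>

lemma is_cycle_iff_list_all2:
  "is_cycle adj vs \<longleftrightarrow> 3 \<le> length vs \<and> distinct vs \<and> list_all2 adj vs (rotate1 vs)"
  by (auto simp: is_cycle_def list_all2_conv_all_nth nth_rotate1)

lemma is_cycle_even_length:
  fixes side :: "'v \<Rightarrow> bool"
  assumes bip: "\<And>u v. adj u v \<Longrightarrow> side u \<noteq> side v" and cyc: "is_cycle adj vs"
  shows "even (length vs)"
proof -
  let ?L = "length vs"
  have step: "adj (vs ! k) (vs ! ((k + 1) mod ?L))" if "k < ?L" for k
    using cyc that by (simp add: is_cycle_def)
  have L: "?L \<ge> 3" using cyc by (simp add: is_cycle_def)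
  have alt: "side (vs ! k) = (side (vs ! 0) \<longleftrightarrow> even k)" if "k < ?L" for k
    using that
  proof (induction k)
    case (Suc k)
    then show ?case using bip[OF step[of k]] by auto
  qed simp
  have last: "?L - 1 < ?L" and wrap: "(?L - 1 + 1) mod ?L = 0"
    using L by (cases ?L; simp)+
  have "side (vs ! (?L - 1)) \<noteq> side (vs ! 0)"
    using bip[OF step[OF last]] wrap by simp
  then show ?thesis
    using alt[OF last] L by auto
qed

lemma is_cycle_4:
  "is_cycle adj [v0, v1, v2, v3] \<longleftrightarrow>
     distinct [v0, v1, v2, v3] \<and> adj v0 v1 \<and> adj v1 v2 \<and> adj v2 v3 \<and> adj v3 v0"
  by (simp add: is_cycle_iff_list_all2)

lemma is_cycle_6:
  "is_cycle adj [v0, v1, v2, v3, v4, v5] \<longleftrightarrow>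
     distinct [v0, v1, v2, v3, v4, v5] \<and>
     adj v0 v1 \<and> adj v1 v2 \<and> adj v2 v3 \<and> adj v3 v4 \<and> adj v4 v5 \<and> adj v5 v0"
  by (simp add: is_cycle_iff_list_all2)

definition col_support :: "(nat \<Rightarrow> nat \<Rightarrow> nat) \<Rightarrow> nat \<Rightarrow> nat \<Rightarrow> nat set" where
  "col_support H m j = {r \<in> {1..m}. H r j = 1}"

text \<open>Viewing columns as sets of rows, a 4-cycle of the Tanner graph is a pair of columns sharing
  two rows, and a 6-cycle is three columns pairwise sharing three distinct rows.\<close>

definition no_4_cycles :: "'c set \<Rightarrow> ('c \<Rightarrow> 'r set) \<Rightarrow> bool" where
  "no_4_cycles C N \<longleftrightarrow>
     \<not> (\<exists>j\<in>C. \<exists>k\<in>C. \<exists>x y. j \<noteq> k \<and> x \<noteq> y \<and> {x, y} \<subseteq> N j \<inter> N k)"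

definition no_6_cycles :: "'c set \<Rightarrow> ('c \<Rightarrow> 'r set) \<Rightarrow> bool" where
  "no_6_cycles C N \<longleftrightarrow>
     \<not> (\<exists>j\<in>C. \<exists>k\<in>C. \<exists>l\<in>C. \<exists>x y z. j \<noteq> k \<and> k \<noteq> l \<and> l \<noteq> j \<and>
        x \<noteq> y \<and> y \<noteq> z \<and> z \<noteq> x \<and> x \<in> N j \<inter> N k \<and> y \<in> N k \<inter> N l \<and> z \<in> N l \<inter> N j)"

lemma no_4_cyclesD:
  "no_4_cycles C N \<Longrightarrow> j \<in> C \<Longrightarrow> k \<in> C \<Longrightarrow> x \<noteq> y \<Longrightarrow>
    x \<in> N j \<Longrightarrow> x \<in> N k \<Longrightarrow> y \<in> N j \<Longrightarrow> y \<in> N k \<Longrightarrow> j = k"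
  unfolding no_4_cycles_def by blast

lemma no_6_cyclesD:
  "no_6_cycles C N \<Longrightarrow> j \<in> C \<Longrightarrow> k \<in> C \<Longrightarrow> l \<in> C \<Longrightarrow>
    j \<noteq> k \<Longrightarrow> k \<noteq> l \<Longrightarrow> l \<noteq> j \<Longrightarrow> x \<noteq> y \<Longrightarrow> y \<noteq> z \<Longrightarrow> z \<noteq> x \<Longrightarrow>
    x \<in> N j \<Longrightarrow> x \<in> N k \<Longrightarrow> y \<in> N k \<Longrightarrow> y \<in> N l \<Longrightarrow> z \<in> N l \<Longrightarrow> z \<in> N j \<Longrightarrow> False"
  unfolding no_6_cycles_def by blast

lemma no_4_cycles_mono: "no_4_cycles C N \<Longrightarrow> S \<subseteq> C \<Longrightarrow> no_4_cycles S N"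
  unfolding no_4_cycles_def by blast

lemma no_6_cycles_mono: "no_6_cycles C N \<Longrightarrow> S \<subseteq> C \<Longrightarrow> no_6_cycles S N"
  unfolding no_6_cycles_def by blast

lemma no_4_cycles_cong: "(\<And>j. j \<in> C \<Longrightarrow> N j = N' j) \<Longrightarrow> no_4_cycles C N = no_4_cycles C N'"
  unfolding no_4_cycles_def by (simp cong: bex_cong)

lemma no_6_cycles_cong: "(\<And>j. j \<in> C \<Longrightarrow> N j = N' j) \<Longrightarrow> no_6_cycles C N = no_6_cycles C N'"
  unfolding no_6_cycles_def by (simp cong: bex_cong)

lemma tanner_adj_Inl_iff [simp]:
  "tanner_adj H m n (Inl r) v \<longleftrightarrow> (\<exists>j. v = Inr j \<and> j \<in> {1..n} \<and> r \<in> col_support H m j)"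
  by (cases v) (auto simp: col_support_def)

lemma tanner_adj_Inr_iff [simp]:
  "tanner_adj H m n (Inr j) v \<longleftrightarrow> (\<exists>r. v = Inl r \<and> j \<in> {1..n} \<and> r \<in> col_support H m j)"
  by (cases v) (auto simp: col_support_def)

lemma tanner_no_4_cycle:
  assumes "no_4_cycles {1..n} (col_support H m)"
  shows "\<not> is_cycle (tanner_adj H m n) [v0, v1, v2, v3]"
  using assms unfolding is_cycle_4
  by (cases v0; auto simp del: tanner_adj.simps atLeastAtMost_iff; metis no_4_cyclesD)

lemma tanner_no_6_cycle:
  assumes "no_6_cycles {1..n} (col_support H m)"
  shows "\<not> is_cycle (tanner_adj H m n) [v0, v1, v2, v3, v4, v5]"
  using assms unfolding is_cycle_6
  by (cases v0; auto simp del: tanner_adj.simps atLeastAtMost_iff; metis no_6_cyclesD)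

lemma is_cycle_tanner_length_ge_8:
  assumes "no_4_cycles {1..n} (col_support H m)" and "no_6_cycles {1..n} (col_support H m)"
    and cyc: "is_cycle (tanner_adj H m n) vs"
  shows "8 \<le> length vs"
proof -
  have "isl u \<noteq> isl v" if "tanner_adj H m n u v" for u v
    using that by (cases u) auto
  then have "even (length vs)"
    using cyc by (rule is_cycle_even_length)
  moreover have "3 \<le> length vs"
    using cyc by (simp add: is_cycle_def)
  moreover have "length vs \<noteq> 4"
    using cyc tanner_no_4_cycle[OF assms(1)] by (auto simp: length_Suc_conv numeral_eq_Suc)
  moreover have "length vs \<noteq> 6"
    using cyc tanner_no_6_cycle[OF assms(2)] by (auto simp: length_Suc_conv numeral_eq_Suc)
  ultimately show ?thesis
    by presburger
qed

lemma girth_tanner_ge_8: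
  assumes "no_4_cycles {1..n} (col_support H m)" and "no_6_cycles {1..n} (col_support H m)"
  shows "girth (tanner_adj H m n) \<ge> 8"
  unfolding girth_def
  using is_cycle_tanner_length_ge_8[OF assms] by (auto intro!: Inf_greatest simp: numeral_eq_enat)

lemma even_card_if_rows_even:
  assumes fin: "finite S" and weight: "\<forall>j\<in>S. card (N j) = k" and "odd k"
    and rows: "\<forall>r. even (card {j\<in>S. r \<in> N j})"
  shows "even (card S)"
proof -
  let ?U = "\<Union> (N ` S)"
  have "finite (N j)" if "j \<in> S" for j
    using weight that \<open>odd k\<close> by (metis card.infinite even_zero)
  then have finU: "finite ?U"
    using fin by (intro finite_UN_I)
  have count: "\<forall>j\<in>S. card {r \<in> ?U. r \<in> N j} = k"
  proof
    fix j assume "j \<in> S"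
    then have "{r \<in> ?U. r \<in> N j} = N j" by blast
    then show "card {r \<in> ?U. r \<in> N j} = k" using weight \<open>j \<in> S\<close> by simp
  qed
  have "(\<Sum>r\<in>?U. card {j\<in>S. r \<in> N j}) = k * card S"
    using finU fin count by (rule sum_multicount)
  moreover have "even (\<Sum>r\<in>?U. card {j\<in>S. r \<in> N j})"
    using rows by (simp add: dvd_sum)
  ultimately show ?thesis
    using \<open>odd k\<close> by simp
qed

lemma row_has_partner:
  assumes "finite S" and "\<forall>r. even (card {j\<in>S. r \<in> N j})" and "p \<in> S" and "r \<in> N p"
  shows "\<exists>q\<in>S. q \<noteq> p \<and> r \<in> N q"
proof (rule ccontr)
  assume "\<not> ?thesis"
  then have "{j\<in>S. r \<in> N j} = {p}"
    using assms(3,4) by auto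
  then show False
    using assms(2)[rule_format, of r] by simp
qed

lemma partner_map:
  assumes "finite S" and "\<forall>r. even (card {j\<in>S. r \<in> N j})" and "no_4_cycles S N" and "p \<in> S"
  obtains f where "inj_on f (N p)" and "f ` N p \<subseteq> S - {p}" and "\<forall>r\<in>N p. r \<in> N (f r)"
proof -
  have "\<forall>r\<in>N p. \<exists>q. q \<in> S \<and> q \<noteq> p \<and> r \<in> N q"
    using row_has_partner[OF assms(1,2,4)] by blast
  then obtain f where f: "\<forall>r\<in>N p. f r \<in> S \<and> f r \<noteq> p \<and> r \<in> N (f r)"
    by (rule bchoice [elim_format]) blast
  have "inj_on f (N p)"
  proof (rule inj_onI)
    fix x y assume xy: "x \<in> N p" "y \<in> N p" "f x = f y"
    show "x = y"
    proof (rule ccontr)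
      assume "x \<noteq> y"
      moreover have "f x \<in> S" "x \<in> N (f x)" "y \<in> N (f x)"
        using f xy by auto
      ultimately have "p = f x"
        using no_4_cyclesD[OF assms(3,4)] xy by blast
      then show False
        using f xy by auto
    qed
  qed
  with f show thesis
    using that by auto
qed

lemma shared_row_if_card_4:
  assumes fin: "finite S" and "card S = 4" and weight: "\<forall>j\<in>S. card (N j) = 3"
    and rows: "\<forall>r. even (card {j\<in>S. r \<in> N j})" and no4: "no_4_cycles S N"
    and "p \<in> S" and "q \<in> S" and "p \<noteq> q"
  shows "\<exists>r. r \<in> N p \<and> r \<in> N q"
proof -
  obtain f where inj: "inj_on f (N p)" and img: "f ` N p \<subseteq> S - {p}"
    and f: "\<forall>r\<in>N p. r \<in> N (f r)"
    using partner_map[OF fin rows no4 \<open>p \<in> S\<close>] .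
  have "card (f ` N p) = card (S - {p})"
    using card_image[OF inj] weight \<open>p \<in> S\<close> \<open>card S = 4\<close> fin by simp
  then have "f ` N p = S - {p}"
    using img fin by (intro card_subset_eq) auto
  then obtain r where "r \<in> N p" "q = f r"
    using \<open>q \<in> S\<close> \<open>p \<noteq> q\<close> by (metis Diff_iff imageE singletonD)
  then show ?thesis
    using f by blast
qed

lemma no_even_cover_of_card_4:
  assumes fin: "finite S" and "card S = 4" and weight: "\<forall>j\<in>S. card (N j) = 3"
    and rows: "\<forall>r. even (card {j\<in>S. r \<in> N j})"
    and no4: "no_4_cycles S N" and no6: "no_6_cycles S N"
  shows False
proof -
  obtain p where p: "p \<in> S"
    using \<open>card S = 4\<close> by fastforce
  obtain x y where xy: "x \<in> N p" "y \<in> N p" "x \<noteq> y"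
    using weight p by (metis card_3_iff insertI1 insertI2)
  obtain k where k: "k \<in> S" "k \<noteq> p" "x \<in> N k"
    using row_has_partner[OF fin rows p xy(1)] by blast
  obtain l where l: "l \<in> S" "l \<noteq> p" "y \<in> N l"
    using row_has_partner[OF fin rows p xy(2)] by blast
  have "k \<noteq> l"
    using no_4_cyclesD[OF no4 p k(1) xy(3) xy(1) k(3) xy(2)] k l by blast
  then obtain z where z: "z \<in> N k" "z \<in> N l"
    using shared_row_if_card_4[OF fin \<open>card S = 4\<close> weight rows no4 k(1) l(1)] by blast
  have "z \<noteq> x"
    using no_4_cyclesD[OF no4 p l(1) xy(3) xy(1) _ xy(2) l(3)] l z by blast
  moreover have "z \<noteq> y"
    using no_4_cyclesD[OF no4 p k(1) xy(3) xy(1) k(3) xy(2)] k z by blast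
  ultimately show False
    using no_6_cyclesD[OF no6 p k(1) l(1) k(2)[symmetric] \<open>k \<noteq> l\<close> l(2) _ _ _
        xy(1) k(3) z l(3) xy(2)] xy(3)
    by blast
qed

lemma card_ge_6_if_rows_even:
  assumes fin: "finite S" and "S \<noteq> {}" and weight: "\<forall>j\<in>S. card (N j) = 3"
    and rows: "\<forall>r. even (card {j\<in>S. r \<in> N j})"
    and no4: "no_4_cycles S N" and no6: "no_6_cycles S N"
  shows "6 \<le> card S"
proof -
  obtain p where p: "p \<in> S"
    using \<open>S \<noteq> {}\<close> by blast
  obtain f where "inj_on f (N p)" and "f ` N p \<subseteq> S - {p}"
    using partner_map[OF fin rows no4 p] by metis
  then have "card (N p) \<le> card (S - {p})"
    using fin by (intro card_inj_on_le) auto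
  then have "4 \<le> card S"
    using weight p fin by (simp add: card_Diff_singleton)
  moreover have "even (card S)"
    using even_card_if_rows_even[OF fin weight _ rows] by simp
  moreover have "card S \<noteq> 4"
    using no_even_cover_of_card_4[OF fin _ weight rows no4 no6] by blast
  ultimately show ?thesis
    by presburger
qed

lemma codeword_rows_even:
  assumes x: "x \<in> code H m n" and H01: "\<forall>r j. H r j \<le> 1"
  shows "even (card {j \<in> {j \<in> {1..n}. x j \<noteq> 0}. r \<in> col_support H m j})"
proof (cases "r \<in> {1..m}")
  case True
  let ?T = "{j \<in> {j \<in> {1..n}. x j \<noteq> 0}. r \<in> col_support H m j}"
  let ?P = "\<lambda>j. x j \<noteq> 0 \<and> r \<in> col_support H m j"
  have "(\<Sum>j=1..n. H r j * x j) = (\<Sum>j=1..n. if ?P j then 1 else 0)"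
  proof (rule sum.cong)
    fix j assume "j \<in> {1..n}"
    then have "x j \<in> {0, 1}" and "H r j \<in> {0, 1}"
      using x H01[rule_format, of r j] by (auto simp: code_def)
    then show "H r j * x j = (if ?P j then 1 else 0)"
      using True by (auto simp: col_support_def)
  qed simp
  also have "\<dots> = card {j \<in> {1..n}. ?P j}"
    by (simp add: sum.inter_filter[symmetric])
  also have "{j \<in> {1..n}. ?P j} = ?T"
    by auto
  finally have "(\<Sum>j=1..n. H r j * x j) = card ?T" .
  moreover have "even (\<Sum>j=1..n. H r j * x j)"
    using x True unfolding code_def by blast
  ultimately show ?thesis
    by simp
next
  case False
  then have "{j \<in> {j \<in> {1..n}. x j \<noteq> 0}. r \<in> col_support H m j} = {}"
    by (auto simp: col_support_def)
  then show ?thesis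
    by (metis card.empty even_zero)
qed

lemma min_distance_ge_6:
  assumes H01: "\<forall>r j. H r j \<le> 1" and weight: "\<forall>j\<in>{1..n}. card (col_support H m j) = 3"
    and no4: "no_4_cycles {1..n} (col_support H m)" and no6: "no_6_cycles {1..n} (col_support H m)"
  shows "min_distance H m n \<ge> 6"
proof -
  have weight_ge_6: "6 \<le> hamming_weight n x"
    if x: "x \<in> code H m n" and "\<exists>j\<in>{1..n}. x j \<noteq> 0" for x
  proof -
    let ?S = "{j \<in> {1..n}. x j \<noteq> 0}"
    have "?S \<subseteq> {1..n}" and "?S \<noteq> {}"
      using that(2) by auto
    then show ?thesis
      unfolding hamming_weight_def
      using card_ge_6_if_rows_even[of ?S "col_support H m"] weight codeword_rows_even[OF x H01]
        no_4_cycles_mono[OF no4] no_6_cycles_mono[OF no6] by auto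
  qed
  show ?thesis
    unfolding min_distance_def
  proof (rule Inf_greatest)
    fix e
    assume "e \<in> {enat (hamming_weight n x) | x. x \<in> code H m n \<and> (\<exists>j\<in>{1..n}. x j \<noteq> 0)}"
    then obtain x where "e = enat (hamming_weight n x)" and "x \<in> code H m n"
      and "\<exists>j\<in>{1..n}. x j \<noteq> 0"
      by blast
    then show "6 \<le> e"
      using weight_ge_6 by (simp add: numeral_eq_enat)
  qed
qed

definition H_s_column ::
    "nat \<Rightarrow> (nat \<Rightarrow> nat) \<Rightarrow> (nat \<Rightarrow> nat) \<Rightarrow> (nat \<Rightarrow> nat) \<Rightarrow> nat \<Rightarrow> nat set" where
  "H_s_column t b a ii j = {row1 a j, row2 t b a ii j, row3 t b a ii j}"

context
  fixes t :: nat and b a ii :: "nat \<Rightarrow> nat"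
  assumes mono: "strict_mono_on {1..t} b"
    and pos: "\<forall>i\<in>{1..t}. b i > 0"
    and bij: "bij_betw (\<lambda>j. (a j, ii j)) {1..t^2} ({1..t} \<times> {1..t})"
begin

lemma H_s_label_range: "j \<in> {1..t^2} \<Longrightarrow> a j \<in> {1..t} \<and> ii j \<in> {1..t}"
  using bij_betw_apply[OF bij] by auto

lemma H_s_b_range: "j \<in> {1..t^2} \<Longrightarrow> 0 < b (ii j) \<and> b (ii j) \<le> b t"
  using H_s_label_range[of j] pos by (auto intro: strict_mono_on_leD[OF mono])

lemma H_s_column_eqI:
  assumes "j \<in> {1..t^2}" and "k \<in> {1..t^2}" and "a j = a k" and "b (ii j) = b (ii k)"
  shows "j = k"
proof -
  have "ii j = ii k"
    using strict_mono_on_eqD[OF mono assms(4)] H_s_label_range assms(1,2) by auto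
  then show ?thesis
    using bij_betw_imp_inj_on[OF bij] assms(1-3) by (auto dest: inj_onD)
qed

lemma row1_less_row2: "j \<in> {1..t^2} \<Longrightarrow> k \<in> {1..t^2} \<Longrightarrow> row1 a j < row2 t b a ii k"
  using H_s_label_range[of j] H_s_label_range[of k] H_s_b_range[of k]
  by (auto simp: row1_def row2_def)

lemma row2_less_row3: "j \<in> {1..t^2} \<Longrightarrow> k \<in> {1..t^2} \<Longrightarrow> row2 t b a ii j < row3 t b a ii k"
  using H_s_label_range[of j] H_s_label_range[of k] H_s_b_range[of j] H_s_b_range[of k]
  by (auto simp: row1_def row2_def row3_def)

lemma card_H_s_column: "j \<in> {1..t^2} \<Longrightarrow> card (H_s_column t b a ii j) = 3"
  using row1_less_row2[of j j] row2_less_row3[of j j] by (simp add: H_s_column_def)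

lemma H_s_shared_row:
  assumes "j \<in> {1..t^2}" and "k \<in> {1..t^2}"
    and "x \<in> H_s_column t b a ii j" and "x \<in> H_s_column t b a ii k"
  shows "x = row1 a j \<and> x = row1 a k \<or> x = row2 t b a ii j \<and> x = row2 t b a ii k
    \<or> x = row3 t b a ii j \<and> x = row3 t b a ii k"
  using assms row1_less_row2[of j k] row1_less_row2[of k j] row2_less_row3[of j k]
    row2_less_row3[of k j] row1_less_row2[of j j] row1_less_row2[of k k] row2_less_row3[of j j] row2_less_row3[of k k]
  unfolding H_s_column_def by auto

lemma H_s_no_4_cycles: "no_4_cycles {1..t^2} (H_s_column t b a ii)"
  unfolding no_4_cycles_def
proof clarify
  fix j k x y
  assume j: "j \<in> {1..t^2}" and k: "k \<in> {1..t^2}" and "j \<noteq> k" "x \<noteq> y"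
    and "{x, y} \<subseteq> H_s_column t b a ii j \<inter> H_s_column t b a ii k"
  then show False
    using H_s_shared_row[OF j k, of x] H_s_shared_row[OF j k, of y] H_s_column_eqI[OF j k]
    by (auto simp: row1_def row2_def row3_def)
qed

lemma H_s_no_layered_6_cycle:
  assumes free: "free_3AP t b"
    and p: "p \<in> {1..t^2}" and q: "q \<in> {1..t^2}" and r: "r \<in> {1..t^2}" and "q \<noteq> r"
    and e1: "row1 a p = row1 a q" and e2: "row2 t b a ii q = row2 t b a ii r"
    and e3: "row3 t b a ii r = row3 t b a ii p"
  shows False
proof -
  have "a p = a q" and "b (ii q) + a q = b (ii r) + a r"
    and "2 * a r + b (ii r) = 2 * a p + b (ii p)"
    using e1 e2 e3 by (simp_all add: row1_def row2_def row3_def)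
  then have ap: "b (ii p) + b (ii r) = 2 * b (ii q)"
    by linarith
  have "b (ii q) \<noteq> b (ii r)"
    using H_s_column_eqI[OF q r] \<open>q \<noteq> r\<close> \<open>b (ii q) + a q = b (ii r) + a r\<close> by auto
  then have "b (ii p) \<noteq> b (ii r) \<and> b (ii p) \<noteq> b (ii q)"
    using ap by linarith
  then show False
    using free H_s_label_range[OF p] H_s_label_range[OF q] H_s_label_range[OF r] ap
      \<open>b (ii q) \<noteq> b (ii r)\<close>
    unfolding free_3AP_def by (metis (no_types, lifting))
qed

lemma H_s_no_6_cycles:
  assumes "free_3AP t b"
  shows "no_6_cycles {1..t^2} (H_s_column t b a ii)"
  unfolding no_6_cycles_def
proof clarify
  fix j k l x y z
  assume j: "j \<in> {1..t^2}" and k: "k \<in> {1..t^2}" and l: "l \<in> {1..t^2}"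
    and "j \<noteq> k" "k \<noteq> l" "l \<noteq> j" "x \<noteq> y" "y \<noteq> z" "z \<noteq> x"
    and "x \<in> H_s_column t b a ii j" "x \<in> H_s_column t b a ii k"
    and "y \<in> H_s_column t b a ii k" "y \<in> H_s_column t b a ii l"
    and "z \<in> H_s_column t b a ii l" "z \<in> H_s_column t b a ii j"
  then show False
    using H_s_shared_row[OF j k, of x] H_s_shared_row[OF k l, of y] H_s_shared_row[OF l j, of z]
      H_s_no_layered_6_cycle[OF assms j k l] H_s_no_layered_6_cycle[OF assms j l k]
      H_s_no_layered_6_cycle[OF assms k j l] H_s_no_layered_6_cycle[OF assms k l j]
      H_s_no_layered_6_cycle[OF assms l j k] H_s_no_layered_6_cycle[OF assms l k j]
    by metis
qed

lemma col_support_H_s: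
  assumes "\<forall>j\<in>{1..t^2}. row3 t b a ii j \<le> m" and "j \<in> {1..t^2}"
  shows "col_support (H_s t b a ii m) m j = H_s_column t b a ii j"
proof -
  have "row3 t b a ii j \<le> m"
    using assms by blast
  then have "H_s_column t b a ii j \<subseteq> {1..m}"
    using assms(2) H_s_label_range[of j] row1_less_row2[of j j] row2_less_row3[of j j]
    by (auto simp: H_s_column_def row1_def)
  then show ?thesis
    using assms(2) by (auto simp: col_support_def H_s_def H_s_column_def)
qed

end

theorem proposition3:
  fixes t m :: nat and b a ii :: "nat \<Rightarrow> nat"
  assumes "t \<ge> 1"
    and "strict_mono_on {1..t} b"
    and "\<forall>i\<in>{1..t}. b i > 0"
    and "free_3AP t b"
    and "bij_betw (\<lambda>j. (a j, ii j)) {1..t^2} ({1..t} \<times> {1..t})"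
    and "\<forall>j\<in>{1..t^2}. row3 t b a ii j \<le> m"
  shows "girth (tanner_adj (H_s t b a ii m) m (t^2)) \<ge> 8
         \<and> min_distance (H_s t b a ii m) m (t^2) \<ge> 6"
proof -
  let ?H = "H_s t b a ii m"
  have support: "j \<in> {1..t^2} \<Longrightarrow> col_support ?H m j = H_s_column t b a ii j" for j
    using col_support_H_s[OF assms(2,3,5,6)] .
  have no4: "no_4_cycles {1..t^2} (col_support ?H m)"
    using H_s_no_4_cycles[OF assms(2,3,5)] by (subst no_4_cycles_cong[OF support])
  have no6: "no_6_cycles {1..t^2} (col_support ?H m)"
    using H_s_no_6_cycles[OF assms(2,3,5,4)] by (subst no_6_cycles_cong[OF support])
  have weight: "\<forall>j\<in>{1..t^2}. card (col_support ?H m j) = 3"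
    using card_H_s_column[OF assms(2,3,5)] support by simp
  have "\<forall>r j. ?H r j \<le> 1"
    by (simp add: H_s_def)
  then show ?thesis
    using girth_tanner_ge_8[OF no4 no6] min_distance_ge_6[OF _ weight no4 no6] by simp
qed

end
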